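(* Let $d\ge 2$. For a finite subset $V\subset S^{d-1}$ with $|V|\ge 2$ and a region $\mathcal{A}\subseteq S^{d-1}$, let $N(V,\mathcal{A})$ be the minimal number $N$ such that $\mathcal{A}$ can be written as a disjoint union of subregions $\mathcal{A}_1,\dots,\mathcal{A}_N$ with $\operatorname{Diam}(\mathcal{A}_i)<d_{\min}(V)$ for all $i$, and set $$C(V,\mathcal{A})=\pi(\mathcal{A})-\pi^2(\mathcal{A})+\Big(\frac{N(V,\mathcal{A})}{|V|}-1\Big)\pi(\mathcal{A}).$$ Let $V,V'$ be two finite subsets of $S^{d-1}$. If either (1) $|V|=|V'|$ and $d_{\min}(V)>d_{\min}(V')$, or (2) $d_{\min}(V)=d_{\min}(V')$ and $|V|>|V'|$, then $C(V,\mathcal{A})\le C(V',\mathcal{A})$ for every region $\mathcal{A}$ of $S^{d-1}$.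
   Context: $S^{d-1}$ is the unit sphere in $\mathbb{R}^d$ with Euclidean norm $\|\cdot\|$. $d_{\min}(V)=\min\{\|v-v'\| : v,v'\in V,\ v\neq v'\}$. For a region $\mathcal{B}\subseteq S^{d-1}$, $\operatorname{Diam}(\mathcal{B})=\sup\{\|x-x'\|: x,x'\in\mathcal{B}\}$. $\pi$ is the normalized uniform surface probability measure on $S^{d-1}$; regions are measurable subsets of $S^{d-1}$ admitting such finite decompositions. (The quantity $C(V,\mathcal{A})$ is an upper bound for the variance of $\frac{1}{|V|}\sum_{v\in V}I_{\mathcal{A}}(Tv)$ with $T$ Haar-uniform on $O(d)$.) *)

theory Defs
  imports "HOL-Analysis.Analysis"
begin

definition dmin :: "'a::euclidean_space set \<Rightarrow> real" where
  "dmin V = Min {dist v v' | v v'. v \<in> V \<and> v' \<in> V \<and> v \<noteq> v'}"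

text \<open>Cone over a subset of the sphere (radii in (0,1]); its normalized Lebesgue
  volume is the normalized uniform surface measure of the subset.\<close>
definition sphere_cone :: "'a::euclidean_space set \<Rightarrow> 'a set" where
  "sphere_cone A = {t *\<^sub>R x | t x. 0 < t \<and> t \<le> 1 \<and> x \<in> A}"

definition sphere_region :: "'a::euclidean_space set \<Rightarrow> bool" where
  "sphere_region A \<longleftrightarrow> A \<subseteq> sphere 0 1 \<and> sphere_cone A \<in> sets lebesgue"

definition sphere_prob :: "'a::euclidean_space set \<Rightarrow> real" where
  "sphere_prob A = measure lebesgue (sphere_cone A) / measure lebesgue (ball (0::'a) 1)"

definition Nsplit :: "'a::euclidean_space set \<Rightarrow> 'a set \<Rightarrow> nat" where
  "Nsplit V A = (LEAST n. \<exists>P :: nat \<Rightarrow> 'a set.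
      (\<forall>i<n. sphere_region (P i) \<and> diameter (P i) < dmin V) \<and>
      disjoint_family_on P {..<n} \<and> (\<Union>i<n. P i) = A)"

definition Cvar :: "'a::euclidean_space set \<Rightarrow> 'a set \<Rightarrow> real" where
  "Cvar V A = sphere_prob A - (sphere_prob A)\<^sup>2
     + (real (Nsplit V A) / real (card V) - 1) * sphere_prob A"

end

theory Submission
  imports Defs
begin

text \<open>Since the surface measure enters C(V,A) with a nonnegative coefficient, it suffices to compare
  the ratios N(V,A)/|V|. The number N(V,A) depends on V only through d_min(V) and is
  antitone in it: a partition into pieces of diameter below d_min(V') also has pieces of diameter
  below any larger bound. The minimum defining N(V,A) exists because the compact sphere is covered
  by finitely many small balls, whose disjointification cuts A into finitely many subregions.\<close>

definition small_partition :: "real \<Rightarrow> nat \<Rightarrow> (nat \<Rightarrow> 'a::euclidean_space set) \<Rightarrow> 'a set \<Rightarrow> bool" where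
  "small_partition \<delta> n P A \<longleftrightarrow>
     (\<forall>i<n. sphere_region (P i) \<and> diameter (P i) < \<delta>) \<and>
     disjoint_family_on P {..<n} \<and> (\<Union>i<n. P i) = A"

lemma Nsplit_eq_Least_small_partition: "Nsplit V A = (LEAST n. \<exists>P. small_partition (dmin V) n P A)"
  unfolding Nsplit_def small_partition_def ..

lemma small_partition_mono:
  "small_partition \<delta> n P A \<Longrightarrow> \<delta> \<le> \<delta>' \<Longrightarrow> small_partition \<delta>' n P A"
  unfolding small_partition_def by force

lemma sphere_cone_Int_vimage_sgn:
  assumes "A \<subseteq> sphere 0 1"
  shows "sphere_cone (A \<inter> B) = sphere_cone A \<inter> sgn -` B"
proof -
  have "sgn (t *\<^sub>R x) = x" if "0 < t" "x \<in> A" for t x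
    using assms that by (auto simp: sgn_scaleR sgn_div_norm)
  then show ?thesis
    unfolding sphere_cone_def by fastforce
qed

lemma sphere_region_Int_borel:
  assumes "sphere_region A" "B \<in> sets borel"
  shows "sphere_region (A \<inter> B)"
proof -
  have "sgn -` B \<in> sets lebesgue"
    using measurable_sets[OF borel_measurable_sgn assms(2)] by simp
  then have "sphere_cone A \<inter> sgn -` B \<in> sets lebesgue"
    using assms(1) unfolding sphere_region_def by blast
  then show ?thesis
    using assms(1) sphere_cone_Int_vimage_sgn unfolding sphere_region_def by auto
qed

lemma sphere_finite_ball_cover:
  assumes "r > 0"
  obtains n and c :: "nat \<Rightarrow> 'a::euclidean_space" where "sphere 0 1 \<subseteq> (\<Union>i<n. ball (c i) r)"
proof -
  have "seq_compact (sphere (0::'a) 1)"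
    by (simp add: compact_imp_seq_compact)
  then obtain K :: "'a set" where "finite K" and K: "sphere 0 1 \<subseteq> (\<Union>x\<in>K. ball x r)"
    using seq_compact_imp_totally_bounded assms by metis
  then obtain n :: nat and c where "K = c ` {i. i < n}"
    by (auto simp: finite_conv_nat_seg_image)
  then show thesis
    using K that by (simp add: lessThan_def)
qed

lemma small_partition_exists:
  fixes A :: "'a::euclidean_space set"
  assumes "sphere_region A" "\<delta> > 0"
  shows "\<exists>n P. small_partition \<delta> n P A"
proof -
  define r where "r = \<delta> / 3"
  have "r > 0" using assms(2) by (simp add: r_def)
  then obtain n and c :: "nat \<Rightarrow> 'a" where cover: "sphere 0 1 \<subseteq> (\<Union>i<n. ball (c i) r)"
    by (rule sphere_finite_ball_cover)
  define P where "P i = A \<inter> disjointed (\<lambda>j. ball (c j) r) i" for i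
  have "sphere_region (P i)" for i
    unfolding P_def disjointed_def
    by (intro sphere_region_Int_borel[OF assms(1)] sets.Diff borel_open open_UN open_ball ballI)
  moreover have "diameter (P i) < \<delta>" for i
  proof -
    have "P i \<subseteq> ball (c i) r"
      unfolding P_def using disjointed_subset[of "\<lambda>j. ball (c j) r" i] by blast
    then have "diameter (P i) \<le> diameter (ball (c i) r)"
      by (rule diameter_subset) (rule bounded_ball)
    also have "\<dots> = 2 * r"
      using \<open>r > 0\<close> by simp
    finally have "diameter (P i) \<le> 2 * r" .
    then show ?thesis
      using \<open>r > 0\<close> by (simp add: r_def)
  qed
  moreover have "disjoint_family_on P {..<n}"
    using disjoint_family_disjointed[of "\<lambda>j. ball (c j) r"]
    unfolding P_def disjoint_family_on_def by auto
  moreover have "(\<Union>i<n. P i) = A"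
  proof -
    have "A \<subseteq> (\<Union>i<n. ball (c i) r)"
      using assms(1) cover unfolding sphere_region_def by blast
    then show ?thesis
      using finite_UN_disjointed_eq[of "\<lambda>j. ball (c j) r" n]
      unfolding P_def by (auto simp: atLeast0LessThan)
  qed
  ultimately show ?thesis
    unfolding small_partition_def by blast
qed

lemma dmin_pos:
  assumes "finite V" "card V \<ge> 2"
  shows "dmin V > 0"
proof -
  let ?S = "{dist v v' | v v'. v \<in> V \<and> v' \<in> V \<and> v \<noteq> v'}"
  have "?S \<subseteq> (\<lambda>(v, v'). dist v v') ` (V \<times> V)" by auto
  then have "finite ?S"
    using assms(1) finite_subset by blast
  moreover obtain a b where "a \<in> V" "b \<in> V" "a \<noteq> b"
    using assms card_le_Suc0_iff_eq[OF assms(1)] by (metis not_less_eq_eq numeral_2_eq_2)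
  then have "?S \<noteq> {}" by blast
  ultimately show ?thesis
    unfolding dmin_def by auto
qed

lemma Nsplit_antimono_dmin:
  assumes "sphere_region A" "0 < dmin V'" "dmin V' \<le> dmin V"
  shows "Nsplit V A \<le> Nsplit V' A"
proof -
  obtain P where "small_partition (dmin V') (Nsplit V' A) P A"
    using LeastI_ex[OF small_partition_exists[OF assms(1,2)]]
    unfolding Nsplit_eq_Least_small_partition by blast
  then have "small_partition (dmin V) (Nsplit V' A) P A"
    using assms(3) by (rule small_partition_mono)
  then show ?thesis
    unfolding Nsplit_eq_Least_small_partition[of V] by (blast intro: Least_le)
qed

lemma Cvar_le_Cvar:
  assumes "real (Nsplit V A) / real (card V) \<le> real (Nsplit V' A) / real (card V')"
  shows "Cvar V A \<le> Cvar V' A"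
proof -
  have "sphere_prob A \<ge> 0"
    unfolding sphere_prob_def by simp
  then have "(real (Nsplit V A) / real (card V) - 1) * sphere_prob A
      \<le> (real (Nsplit V' A) / real (card V') - 1) * sphere_prob A"
    using assms by (intro mult_right_mono) auto
  then show ?thesis
    unfolding Cvar_def by linarith
qed

theorem corollary1:
  fixes V V' A :: "'a::euclidean_space set"
  assumes "DIM('a) \<ge> 2"
    and "finite V" "V \<subseteq> sphere 0 1" "card V \<ge> 2"
    and "finite V'" "V' \<subseteq> sphere 0 1" "card V' \<ge> 2"
    and "(card V = card V' \<and> dmin V > dmin V') \<or> (dmin V = dmin V' \<and> card V > card V')"
    and "sphere_region A"
  shows "Cvar V A \<le> Cvar V' A"
proof (rule Cvar_le_Cvar)
  have "dmin V' > 0"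
    using assms(5,7) by (rule dmin_pos)
  then have N: "Nsplit V A \<le> Nsplit V' A"
    using assms(8,9) Nsplit_antimono_dmin by force
  have "real (card V') > 0"
    using assms(7) by simp
  with assms(8) N show "real (Nsplit V A) / real (card V) \<le> real (Nsplit V' A) / real (card V')"
    by (auto simp: divide_right_mono frac_le)
qed

end
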